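(* Let $G$ be a digraph and $t,t'\in B_n$ with $t\neq t'$. If $\mathbb{A}(G)$ satisfies the identity $t\approx t'$, then $M_G$ divides $M_{t,t'}$ and $P_G<H_{t,t'}$.
   Context: Digraphs $G=(V,E)$ have $E\subseteq V\times V$, loops allowed, possibly infinite. The graph algebra $\mathbb{A}(G)$ is the groupoid on $V\cup\{\infty\}$ with $xy=x$ if $x,y\in V$ and $(x,y)\in E$, and $xy=\infty$ otherwise. $B_n$ is the set of binary terms in which $x_1,\dots,x_n$ each occur once in this order; for $t\in B_n$ the rooted tree $G(t)$ is defined recursively: $G(x_i)$ is a single vertex, $G(t_1t_2)$ is $G(t_1)\cup G(t_2)$ plus an edge from the leftmost variable of $t_1$ to that of $t_2$; root $x_1$. With $T=G(t)$, $T'=G(t')$, depth $d_T$, height $h$: $H_{t,t'}=\min(h(T),h(T'))$ and $M_{t,t'}=\gcd\{|d_T(x)-d_{T'}(x)|:x\in\{x_1,\dots,x_n\}\}$. A strongly connected component (SCC) is trivial if it is a single vertex without a loop. For $m\ge1$, an $m$-whirl is a digraph whose vertex set is partitioned into nonempty blocks $B_0,\dots,B_{m-1}$ (indices mod $m$) with edge set exactly $\bigcup_iB_i\times B_{i+1}$. $M_G$ is the lcm of all $m$ such that some SCC of $G$ is an $m$-whirl ($1$ if there is none, $\infty$ if such $m$ are unbounded). A path is pleasant if all its vertices lie in trivial SCCs; $P_G$ is the maximal length of a pleasant path ($\infty$ if unbounded, $-\infty$ if none). *)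

theory Defs
  imports Main "HOL-Library.Extended_Nat" "HOL-Library.Extended_Real"
begin

text \<open>The graph algebra A(G) has carrier V plus an extra element infinity; we model its
  elements as 'v option, with None playing the role of infinity.\<close>

definition digraph :: "'v set \<Rightarrow> ('v \<times> 'v) set \<Rightarrow> bool" where
  "digraph V E \<longleftrightarrow> E \<subseteq> V \<times> V"

definition ga_carrier :: "'v set \<Rightarrow> 'v option set" where
  "ga_carrier V = Some ` V \<union> {None}"

definition ga_mult :: "('v \<times> 'v) set \<Rightarrow> 'v option \<Rightarrow> 'v option \<Rightarrow> 'v option" where
  "ga_mult E x y = (case (x, y) of
      (Some a, Some b) \<Rightarrow> (if (a, b) \<in> E then Some a else None)
    | _ \<Rightarrow> None)"

datatype tm = Var nat | App tm tm

fun vars_list :: "tm \<Rightarrow> nat list" where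
  "vars_list (Var i) = [i]"
| "vars_list (App a b) = vars_list a @ vars_list b"

definition B :: "nat \<Rightarrow> tm set" where
  "B n = {t. vars_list t = [1..<Suc n]}"

fun eval :: "('v \<times> 'v) set \<Rightarrow> (nat \<Rightarrow> 'v option) \<Rightarrow> tm \<Rightarrow> 'v option" where
  "eval E a (Var i) = a i"
| "eval E a (App s u) = ga_mult E (eval E a s) (eval E a u)"

definition satisfies :: "'v set \<Rightarrow> ('v \<times> 'v) set \<Rightarrow> tm \<Rightarrow> tm \<Rightarrow> bool" where
  "satisfies V E t t' \<longleftrightarrow>
     (\<forall>a. (\<forall>i. a i \<in> ga_carrier V) \<longrightarrow> eval E a t = eval E a t')"

fun leftmost :: "tm \<Rightarrow> nat" where
  "leftmost (Var i) = i"
| "leftmost (App a b) = leftmost a"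

fun tree_edges :: "tm \<Rightarrow> (nat \<times> nat) set" where
  "tree_edges (Var i) = {}"
| "tree_edges (App a b) = tree_edges a \<union> tree_edges b \<union> {(leftmost a, leftmost b)}"

definition depth :: "tm \<Rightarrow> nat \<Rightarrow> nat" where
  "depth t x = (LEAST k. (leftmost t, x) \<in> tree_edges t ^^ k)"

definition height :: "tm \<Rightarrow> nat" where
  "height t = Max (depth t ` set (vars_list t))"

definition H_tt :: "tm \<Rightarrow> tm \<Rightarrow> nat" where
  "H_tt t t' = min (height t) (height t')"

definition M_tt :: "nat \<Rightarrow> tm \<Rightarrow> tm \<Rightarrow> nat" where
  "M_tt n t t' = Gcd ((\<lambda>x. nat \<bar>int (depth t x) - int (depth t' x)\<bar>) ` {1..n})"

definition scc_of :: "'v set \<Rightarrow> ('v \<times> 'v) set \<Rightarrow> 'v \<Rightarrow> 'v set" where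
  "scc_of V E v = {u \<in> V. (v, u) \<in> E\<^sup>* \<and> (u, v) \<in> E\<^sup>*}"

definition sccs :: "'v set \<Rightarrow> ('v \<times> 'v) set \<Rightarrow> 'v set set" where
  "sccs V E = scc_of V E ` V"

definition trivial_scc :: "('v \<times> 'v) set \<Rightarrow> 'v set \<Rightarrow> bool" where
  "trivial_scc E C \<longleftrightarrow> (\<exists>v. C = {v} \<and> (v, v) \<notin> E)"

definition is_whirl :: "nat \<Rightarrow> 'v set \<Rightarrow> ('v \<times> 'v) set \<Rightarrow> bool" where
  "is_whirl m C F \<longleftrightarrow> m \<ge> 1 \<and>
     (\<exists>Bl :: nat \<Rightarrow> 'v set.
        (\<forall>i<m. Bl i \<noteq> {}) \<and>
        (\<forall>i<m. \<forall>j<m. i \<noteq> j \<longrightarrow> Bl i \<inter> Bl j = {}) \<and>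
        (\<Union>i<m. Bl i) = C \<and>
        F = (\<Union>i<m. Bl i \<times> Bl (Suc i mod m)))"

definition whirl_orders :: "'v set \<Rightarrow> ('v \<times> 'v) set \<Rightarrow> nat set" where
  "whirl_orders V E = {m. \<exists>C \<in> sccs V E. is_whirl m C (E \<inter> C \<times> C)}"

text \<open>M_G: lcm of whirl orders; 1 if none (Lcm {} = 1); infinity if unbounded.\<close>
definition M_G :: "'v set \<Rightarrow> ('v \<times> 'v) set \<Rightarrow> enat" where
  "M_G V E = (if finite (whirl_orders V E) then enat (Lcm (whirl_orders V E)) else \<infinity>)"

definition enat_dvd :: "enat \<Rightarrow> nat \<Rightarrow> bool" where
  "enat_dvd a b = (case a of enat m \<Rightarrow> m dvd b | \<infinity> \<Rightarrow> b = 0)"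

definition pleasant_path :: "'v set \<Rightarrow> ('v \<times> 'v) set \<Rightarrow> 'v list \<Rightarrow> bool" where
  "pleasant_path V E p \<longleftrightarrow> p \<noteq> [] \<and> set p \<subseteq> V \<and>
     (\<forall>i. Suc i < length p \<longrightarrow> (p ! i, p ! Suc i) \<in> E) \<and>
     (\<forall>v \<in> set p. trivial_scc E (scc_of V E v))"

text \<open>P_G: supremum of lengths (number of edges) of pleasant paths; -infinity if none,
  +infinity if unbounded.\<close>
definition P_G :: "'v set \<Rightarrow> ('v \<times> 'v) set \<Rightarrow> ereal" where
  "P_G V E = Sup ((\<lambda>p. ereal (real (length p - 1))) ` {p. pleasant_path V E p})"

end

theory Submission
  imports Defs
begin

text \<open>
  Under an assignment of vertices to the variables, a term of the graph algebra evaluates to a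
  vertex (rather than to \<open>\<infinity>\<close>) exactly when the assignment maps the tree \<open>G(t)\<close>
  homomorphically into \<open>G\<close>. So if \<open>\<A>(G)\<close> satisfies \<open>t \<approx> t'\<close>, every assignment that is a
  homomorphism on \<open>G(t)\<close> is one on \<open>G(t')\<close> as well.

  Sending a variable of depth \<open>d\<close> in \<open>G(t)\<close> to block \<open>d mod m\<close> of an \<open>m\<close>-whirl gives such a
  homomorphism; on \<open>G(t')\<close> it can only step from one block to the next, so the depths in \<open>t\<close> and
  \<open>t'\<close> agree modulo \<open>m\<close>. Sending it instead to the \<open>d\<close>-th vertex of a pleasant path longer than
  the height of \<open>G(t)\<close>, the edges of \<open>G(t')\<close> must go forward along the path, which has no
  backward edges; hence depths in \<open>t'\<close> are bounded by depths in \<open>t\<close>. By symmetry the two depth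
  functions coincide, and a term of \<open>B\<^sub>n\<close> is determined by its depth function.
\<close>

lemma relpow_mod_shift:
  assumes step: "\<forall>(u, v) \<in> R. g v mod m = Suc (g u) mod m" and "(x, y) \<in> R ^^ k"
  shows "g y mod m = (g x + k) mod m"
  using assms(2)
proof (induction k arbitrary: y)
  case (Suc k)
  then obtain z where "(x, z) \<in> R ^^ k" and "(z, y) \<in> R" by auto
  have "g y mod m = Suc (g z mod m) mod m"
    using step \<open>(z, y) \<in> R\<close> by (auto simp: mod_Suc_eq)
  also have "\<dots> = Suc ((g x + k) mod m) mod m"
    using Suc.IH \<open>(x, z) \<in> R ^^ k\<close> by simp
  finally show ?case by (simp add: mod_Suc_eq)
qed simp

lemma relpow_strict_mono:
  fixes g :: "'a \<Rightarrow> nat"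
  assumes "\<forall>(u, v) \<in> R. g u < g v" and "(x, y) \<in> R ^^ k"
  shows "g x + k \<le> g y"
  using assms(2)
proof (induction k arbitrary: y)
  case (Suc k)
  then obtain z where "(x, z) \<in> R ^^ k" and "(z, y) \<in> R" by auto
  with Suc.IH assms(1) show ?case by fastforce
qed simp

lemma walk_rtrancl:
  assumes "\<forall>i. Suc i < length p \<longrightarrow> (p ! i, p ! Suc i) \<in> E"
  shows "j \<le> i \<Longrightarrow> i < length p \<Longrightarrow> (p ! j, p ! i) \<in> E\<^sup>*"
proof (induction i)
  case (Suc i)
  show ?case
  proof (cases "j = Suc i")
    case False
    with Suc have "(p ! j, p ! i) \<in> E\<^sup>*" by simp
    moreover have "(p ! i, p ! Suc i) \<in> E" using assms Suc.prems by blast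
    ultimately show ?thesis by (rule rtrancl_into_rtrancl)
  qed simp
qed simp

section \<open>Depths in the tree of a term\<close>

lemma vars_list_ne: "vars_list t \<noteq> []"
  by (induction t) auto

lemma leftmost_eq_hd: "leftmost t = hd (vars_list t)"
  by (induction t) (auto simp: vars_list_ne)

lemma leftmost_in_vars: "leftmost t \<in> set (vars_list t)"
  by (simp add: leftmost_eq_hd vars_list_ne)

lemma tree_edges_subset: "tree_edges t \<subseteq> set (vars_list t) \<times> set (vars_list t)"
  by (induction t) (auto simp: leftmost_in_vars)

fun depth_rec :: "tm \<Rightarrow> nat \<Rightarrow> nat" where
  "depth_rec (Var i) x = 0"
| "depth_rec (App a b) x = (if x \<in> set (vars_list b) then Suc (depth_rec b x) else depth_rec a x)"

lemma depth_rec_leftmost: "distinct (vars_list t) \<Longrightarrow> depth_rec t (leftmost t) = 0"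
  by (induction t) (auto, metis disjoint_iff leftmost_in_vars)

lemma depth_rec_eq_0D:
  "distinct (vars_list t) \<Longrightarrow> x \<in> set (vars_list t) \<Longrightarrow> depth_rec t x = 0 \<Longrightarrow> x = leftmost t"
  by (induction t) (auto split: if_splits)

lemma depth_rec_tree_edge:
  "distinct (vars_list t) \<Longrightarrow> (u, v) \<in> tree_edges t \<Longrightarrow> depth_rec t v = Suc (depth_rec t u)"
proof (induction t)
  case (App a b)
  then have "distinct (vars_list a)" "distinct (vars_list b)"
    and "set (vars_list a) \<inter> set (vars_list b) = {}" by auto
  with App tree_edges_subset[of a] tree_edges_subset[of b]
    depth_rec_leftmost[of a] depth_rec_leftmost[of b] leftmost_in_vars[of a] leftmost_in_vars[of b]
  show ?case by (auto simp: disjoint_iff)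
qed simp

lemma root_path_depth_rec:
  "x \<in> set (vars_list t) \<Longrightarrow> (leftmost t, x) \<in> tree_edges t ^^ depth_rec t x"
proof (induction t arbitrary: x)
  case (App a b)
  have mono: "(y, z) \<in> tree_edges (App a b) ^^ k"
    if "R \<subseteq> tree_edges (App a b)" and "(y, z) \<in> R ^^ k" for R y z k
    using that relpowp_mono[to_set, of R] by blast
  show ?case
  proof (cases "x \<in> set (vars_list b)")
    case True
    have "(leftmost a, leftmost b) \<in> tree_edges (App a b) ^^ 1" by simp
    moreover have "(leftmost b, x) \<in> tree_edges (App a b) ^^ depth_rec b x"
      by (rule mono[OF _ App.IH(2)[OF True]]) auto
    ultimately show ?thesis using True relpow_trans by fastforce
  next
    case False
    then have "x \<in> set (vars_list a)" using App.prems by simp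
    have "(leftmost a, x) \<in> tree_edges (App a b) ^^ depth_rec a x"
      by (rule mono[OF _ App.IH(1)[OF \<open>x \<in> set (vars_list a)\<close>]]) auto
    with False show ?thesis by simp
  qed
qed simp

lemma depth_eq_depth_rec:
  assumes "distinct (vars_list t)" and "x \<in> set (vars_list t)"
  shows "depth t x = depth_rec t x"
  unfolding depth_def
proof (rule Least_equality)
  show "(leftmost t, x) \<in> tree_edges t ^^ depth_rec t x"
    using assms(2) by (rule root_path_depth_rec)
  fix k assume "(leftmost t, x) \<in> tree_edges t ^^ k"
  \<comment> \<open>modulus \<open>0\<close>: the shift is exact\<close>
  with depth_rec_tree_edge[OF assms(1)]
  have "depth_rec t x mod 0 = (depth_rec t (leftmost t) + k) mod 0"
    by (intro relpow_mod_shift) auto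
  then show "depth_rec t x \<le> k"
    using depth_rec_leftmost[OF assms(1)] by simp
qed

lemma depth_leftmost: "depth t (leftmost t) = 0"
  by (simp add: depth_def)

lemma depth_tree_edge:
  "distinct (vars_list t) \<Longrightarrow> (u, v) \<in> tree_edges t \<Longrightarrow> depth t v = Suc (depth t u)"
  using tree_edges_subset depth_eq_depth_rec depth_rec_tree_edge by fastforce

lemma root_path_depth:
  "distinct (vars_list t) \<Longrightarrow> x \<in> set (vars_list t) \<Longrightarrow> (leftmost t, x) \<in> tree_edges t ^^ depth t x"
  by (simp add: depth_eq_depth_rec root_path_depth_rec)

lemma depth_le_height: "x \<in> set (vars_list t) \<Longrightarrow> depth t x \<le> height t"
  by (simp add: height_def)

text \<open>If the right factor \<open>b'\<close> starts further right than \<open>b\<close>, its first variable is a child of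
  the root in \<open>G(App a' b')\<close> but lies strictly inside \<open>b\<close>, hence deeper, in \<open>G(App a b)\<close>.\<close>

lemma depth_rec_App_differ:
  assumes dist: "distinct (vars_list (App a b))"
    and vars: "vars_list (App a' b') = vars_list (App a b)"
    and shorter: "length (vars_list a) < length (vars_list a')"
  shows "depth_rec (App a' b') (leftmost b') \<noteq> depth_rec (App a b) (leftmost b')"
proof -
  from vars have "vars_list a' @ vars_list b' = vars_list a @ vars_list b" by simp
  then obtain us where "vars_list a' = vars_list a @ us \<and> us @ vars_list b' = vars_list b \<or>
      vars_list a' @ us = vars_list a \<and> vars_list b' = us @ vars_list b"
    unfolding append_eq_append_conv2 by blast
  with shorter have us: "vars_list b = us @ vars_list b'" "us \<noteq> []"
    by (auto dest: arg_cong[where f = length])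
  let ?q = "leftmost b'"
  have "distinct (vars_list b)" "distinct (vars_list b')" using dist us(1) by auto
  have "?q \<in> set (vars_list b)" using us(1) leftmost_in_vars[of b'] by simp
  moreover have "?q \<noteq> leftmost b"
  proof
    assume "?q = leftmost b"
    then have "?q \<in> set us" using us by (simp add: leftmost_eq_hd[of b])
    then show False using \<open>distinct (vars_list b)\<close> us(1) leftmost_in_vars[of b'] by auto
  qed
  ultimately have "depth_rec b ?q \<noteq> 0"
    using depth_rec_eq_0D \<open>distinct (vars_list b)\<close> by blast
  then show ?thesis
    using \<open>?q \<in> set (vars_list b)\<close> depth_rec_leftmost[OF \<open>distinct (vars_list b')\<close>]
      leftmost_in_vars[of b'] by simp
qed

lemma tm_eq_if_depth_rec_eq:
  "distinct (vars_list t) \<Longrightarrow> vars_list t' = vars_list t \<Longrightarrow>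
    \<forall>x \<in> set (vars_list t). depth_rec t' x = depth_rec t x \<Longrightarrow> t' = t"
proof (induction t arbitrary: t')
  case (Var i)
  then show ?case
    by (cases t') (auto simp: append_eq_Cons_conv vars_list_ne)
next
  case (App a b)
  then obtain a' b' where t': "t' = App a' b'"
    by (cases t') (auto simp: Cons_eq_append_conv vars_list_ne)
  have "leftmost b' \<in> set (vars_list (App a b))" "leftmost b \<in> set (vars_list (App a b))"
    using App.prems(2) t' leftmost_in_vars[of b'] leftmost_in_vars[of b]
    by (metis Un_iff set_append vars_list.simps(2))+
  then have "length (vars_list a') = length (vars_list a)"
    using depth_rec_App_differ[of a b a' b'] depth_rec_App_differ[of a' b' a b] App.prems t'
    by (metis linorder_neqE_nat)
  then have vars: "vars_list a' = vars_list a" "vars_list b' = vars_list b"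
    using App.prems(2) t' by (auto simp: append_eq_append_conv)
  moreover have "\<forall>x \<in> set (vars_list a). depth_rec a' x = depth_rec a x"
    and "\<forall>x \<in> set (vars_list b). depth_rec b' x = depth_rec b x"
    using App.prems vars t' by (auto split: if_splits)
  ultimately show ?case
    using App.IH App.prems(1) t' by simp
qed

lemma tm_eq_if_depth_eq:
  assumes dist: "distinct (vars_list t)" and vars: "vars_list t' = vars_list t"
    and eq: "\<forall>x \<in> set (vars_list t). depth t' x = depth t x"
  shows "t' = t"
proof (rule tm_eq_if_depth_rec_eq[OF dist vars], rule ballI)
  fix x assume x: "x \<in> set (vars_list t)"
  have "depth_rec t' x = depth t' x" using depth_eq_depth_rec[of t' x] dist vars x by simp
  also have "\<dots> = depth t x" using eq x by blast
  also have "\<dots> = depth_rec t x" using depth_eq_depth_rec[OF dist x] .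
  finally show "depth_rec t' x = depth_rec t x" .
qed

section \<open>Homomorphisms from term trees into the graph\<close>

definition tree_hom :: "('v \<times> 'v) set \<Rightarrow> (nat \<Rightarrow> 'v) \<Rightarrow> tm \<Rightarrow> bool" where
  "tree_hom E f t \<longleftrightarrow> (\<forall>(u, v) \<in> tree_edges t. (f u, f v) \<in> E)"

lemma eval_Some:
  "eval E (\<lambda>i. Some (f i)) t = (if tree_hom E f t then Some (f (leftmost t)) else None)"
  by (induction t) (auto simp: tree_hom_def ga_mult_def)

lemma satisfies_commute: "satisfies V E s s' \<longleftrightarrow> satisfies V E s' s"
  unfolding satisfies_def by metis

lemma tree_hom_transfer:
  assumes "satisfies V E s s'" and "\<forall>i. f i \<in> V" and "tree_hom E f s"
  shows "tree_hom E f s'"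
proof -
  have "eval E (\<lambda>i. Some (f i)) s' = eval E (\<lambda>i. Some (f i)) s"
    using assms(1,2) by (auto simp: satisfies_def ga_carrier_def)
  with assms(3) show ?thesis by (simp add: eval_Some split: if_splits)
qed

section \<open>Whirls\<close>

lemma whirl_cycle:
  assumes "is_whirl m C F"
  obtains b where "\<And>i. b i \<in> C" and "\<And>i j. (b i, b j) \<in> F \<longleftrightarrow> j mod m = Suc i mod m"
proof -
  obtain Bl where "m \<ge> 1" and ne: "\<forall>i<m. Bl i \<noteq> {}"
    and disj: "\<forall>i<m. \<forall>j<m. i \<noteq> j \<longrightarrow> Bl i \<inter> Bl j = {}"
    and C: "(\<Union>i<m. Bl i) = C" and F: "F = (\<Union>i<m. Bl i \<times> Bl (Suc i mod m))"
    using assms unfolding is_whirl_def by blast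
  define b where "b i = (SOME x. x \<in> Bl (i mod m))" for i
  have b: "b i \<in> Bl (i mod m)" for i
    using ne \<open>m \<ge> 1\<close> unfolding b_def by (simp add: some_in_eq)
  have block: "b i \<in> Bl k \<longleftrightarrow> k = i mod m" if "k < m" for i k
    using b disj that \<open>m \<ge> 1\<close> by (metis disjoint_iff mod_less_divisor less_le_trans zero_less_one)
  have "(b i, b j) \<in> F \<longleftrightarrow> j mod m = Suc i mod m" for i j
  proof -
    have "(b i, b j) \<in> F \<longleftrightarrow> j mod m = Suc (i mod m) mod m"
      using block \<open>m \<ge> 1\<close> unfolding F by auto
    then show ?thesis by (simp add: mod_Suc_eq)
  qed
  moreover have "b i \<in> C" for i
    using b[of i] \<open>m \<ge> 1\<close> C by (auto intro: bexI[of _ "i mod m"])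
  ultimately show ?thesis using that by blast
qed

lemma depth_mod_eq_if_whirl:
  assumes sat: "satisfies V E s s'" and dist: "distinct (vars_list s)"
    and vars: "vars_list s' = vars_list s"
    and "C \<subseteq> V" and "is_whirl m C (E \<inter> C \<times> C)" and x: "x \<in> set (vars_list s)"
  shows "depth s' x mod m = depth s x mod m"
proof -
  obtain b where bC: "\<And>i. b i \<in> C"
    and cycle: "\<And>i j. (b i, b j) \<in> E \<inter> C \<times> C \<longleftrightarrow> j mod m = Suc i mod m"
    using whirl_cycle[OF assms(5)] by blast
  define f where "f x = b (depth s x)" for x
  have f_edge: "(f u, f v) \<in> E \<longleftrightarrow> depth s v mod m = Suc (depth s u) mod m" for u v
  proof -
    have "(f u, f v) \<in> E \<longleftrightarrow> (f u, f v) \<in> E \<inter> C \<times> C" using bC by (simp add: f_def)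
    also have "\<dots> \<longleftrightarrow> depth s v mod m = Suc (depth s u) mod m" unfolding f_def by (rule cycle)
    finally show ?thesis .
  qed
  have "tree_hom E f s"
    unfolding tree_hom_def using f_edge depth_tree_edge[OF dist] by auto
  moreover have "\<forall>i. f i \<in> V" using bC \<open>C \<subseteq> V\<close> by (auto simp: f_def)
  ultimately have "tree_hom E f s'" using tree_hom_transfer[OF sat] by blast
  then have "\<forall>(u, v) \<in> tree_edges s'. depth s v mod m = Suc (depth s u) mod m"
    unfolding tree_hom_def using f_edge by simp
  moreover have "(leftmost s, x) \<in> tree_edges s' ^^ depth s' x"
    using root_path_depth[of s' x] dist vars x by (simp add: leftmost_eq_hd)
  ultimately have "depth s x mod m = (depth s (leftmost s) + depth s' x) mod m"
    by (rule relpow_mod_shift)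
  then show ?thesis by (simp add: depth_leftmost)
qed

lemma whirl_order_dvd_M_tt:
  assumes sat: "satisfies V E t t'" and "t \<in> B n" and "t' \<in> B n"
    and "m \<in> whirl_orders V E"
  shows "m dvd M_tt n t t'"
proof -
  obtain C where "C \<in> sccs V E" and whirl: "is_whirl m C (E \<inter> C \<times> C)"
    using assms(4) unfolding whirl_orders_def by blast
  then have "C \<subseteq> V" unfolding sccs_def scc_of_def by auto
  have dist: "distinct (vars_list t)" and vars: "vars_list t' = vars_list t"
    and set: "set (vars_list t) = {1..n}"
    using assms(2,3) by (auto simp: B_def)
  have "m dvd nat \<bar>int (depth t x) - int (depth t' x)\<bar>" if "x \<in> {1..n}" for x
  proof -
    have "depth t x mod m = depth t' x mod m"
      using depth_mod_eq_if_whirl[OF sat dist vars \<open>C \<subseteq> V\<close> whirl, of x] that set by simp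
    then show ?thesis by (simp only: mod_eq_iff_dvd_symdiff_nat)
  qed
  then show ?thesis unfolding M_tt_def by (intro Gcd_greatest) auto
qed

lemma enat_dvd_M_G:
  assumes "\<forall>m \<in> whirl_orders V E. m dvd k"
  shows "enat_dvd (M_G V E) k"
proof (cases "finite (whirl_orders V E)")
  case True
  then show ?thesis using assms by (simp add: M_G_def enat_dvd_def Lcm_least)
next
  case False
  have "k = 0"
  proof (rule ccontr)
    assume "k \<noteq> 0"
    with assms have "whirl_orders V E \<subseteq> {..k}" by (auto intro: dvd_imp_le)
    with False show False using finite_subset by blast
  qed
  with False show ?thesis by (simp add: M_G_def enat_dvd_def)
qed

section \<open>Pleasant paths\<close>

lemma pleasant_path_edge_forward:
  assumes pp: "pleasant_path V E p" and "i < length p" and "j < length p"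
    and edge: "(p ! i, p ! j) \<in> E"
  shows "i < j"
proof (rule ccontr)
  assume "\<not> i < j"
  moreover have "\<forall>k. Suc k < length p \<longrightarrow> (p ! k, p ! Suc k) \<in> E"
    using pp unfolding pleasant_path_def by blast
  ultimately have "(p ! j, p ! i) \<in> E\<^sup>*"
    using walk_rtrancl[of p E j i] \<open>i < length p\<close> by simp
  have "p ! i \<in> V" "p ! j \<in> V" "trivial_scc E (scc_of V E (p ! i))"
    using pp nth_mem[OF \<open>i < length p\<close>] nth_mem[OF \<open>j < length p\<close>]
    unfolding pleasant_path_def by blast+
  then obtain w where w: "scc_of V E (p ! i) = {w}" "(w, w) \<notin> E"
    unfolding trivial_scc_def by blast
  have "p ! i \<in> scc_of V E (p ! i)" "p ! j \<in> scc_of V E (p ! i)"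
    using \<open>p ! i \<in> V\<close> \<open>p ! j \<in> V\<close> \<open>(p ! j, p ! i) \<in> E\<^sup>*\<close> edge
    unfolding scc_of_def by auto
  with edge w show False by auto
qed

text \<open>The \<open>min\<close> keeps the values on \<open>p\<close> also for variables deeper than \<open>p\<close> is long, or not
  occurring in \<open>s\<close>.\<close>

definition path_colouring :: "'v list \<Rightarrow> tm \<Rightarrow> nat \<Rightarrow> 'v" where
  "path_colouring p s x = p ! min (depth s x) (length p - 1)"

lemma path_colouring_in_set: "p \<noteq> [] \<Longrightarrow> path_colouring p s x \<in> set p"
  unfolding path_colouring_def by (simp add: min_less_iff_disj)

lemma path_colouring_eq:
  "x \<in> set (vars_list s) \<Longrightarrow> height s < length p \<Longrightarrow> path_colouring p s x = p ! depth s x"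
  using depth_le_height[of x s] by (simp add: path_colouring_def min_absorb1)

lemma tree_hom_path_colouring:
  assumes walk: "\<forall>k. Suc k < length p \<longrightarrow> (p ! k, p ! Suc k) \<in> E"
    and dist: "distinct (vars_list s)" and long: "height s < length p"
  shows "tree_hom E (path_colouring p s) s"
  unfolding tree_hom_def
proof (intro ballI, clarify)
  fix u v assume "(u, v) \<in> tree_edges s"
  then have "u \<in> set (vars_list s)" "v \<in> set (vars_list s)" "depth s v = Suc (depth s u)"
    using tree_edges_subset depth_tree_edge[OF dist] by blast+
  moreover have "depth s v < length p" using depth_le_height[of v s] calculation long by simp
  ultimately show "(path_colouring p s u, path_colouring p s v) \<in> E"
    using walk long by (simp add: path_colouring_eq)
qed

lemma depth_le_if_pleasant_path:
  assumes sat: "satisfies V E s s'" and dist: "distinct (vars_list s)"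
    and vars: "vars_list s' = vars_list s"
    and pp: "pleasant_path V E p" and long: "height s < length p" and x: "x \<in> set (vars_list s)"
  shows "depth s' x \<le> depth s x"
proof -
  let ?f = "path_colouring p s"
  have p: "p \<noteq> []" "set p \<subseteq> V" "\<forall>k. Suc k < length p \<longrightarrow> (p ! k, p ! Suc k) \<in> E"
    using pp unfolding pleasant_path_def by auto
  have "tree_hom E ?f s'"
    using tree_hom_transfer[OF sat] tree_hom_path_colouring[OF p(3) dist long]
      path_colouring_in_set[OF p(1)] p(2) by blast
  have "depth s u < depth s v" if "(u, v) \<in> tree_edges s'" for u v
  proof -
    have u: "u \<in> set (vars_list s)" and v: "v \<in> set (vars_list s)"
      using that tree_edges_subset[of s'] vars by auto
    then have "depth s u < length p" "depth s v < length p"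
      using depth_le_height long by (meson le_less_trans)+
    moreover have "(p ! depth s u, p ! depth s v) \<in> E"
      using \<open>tree_hom E ?f s'\<close> that u v long
      unfolding tree_hom_def by (auto simp: path_colouring_eq)
    ultimately show ?thesis using pleasant_path_edge_forward[OF pp] by blast
  qed
  moreover have "(leftmost s, x) \<in> tree_edges s' ^^ depth s' x"
    using root_path_depth[of s' x] dist vars x by (simp add: leftmost_eq_hd)
  ultimately have "depth s (leftmost s) + depth s' x \<le> depth s x"
    by (intro relpow_strict_mono) auto
  then show ?thesis by simp
qed

lemma eq_if_pleasant_path_longer_than_height:
  assumes sat: "satisfies V E s s'" and dist: "distinct (vars_list s)"
    and vars: "vars_list s' = vars_list s"
    and pp: "pleasant_path V E p" and long: "height s < length p"
  shows "s' = s"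
proof -
  have le: "depth s' x \<le> depth s x" if "x \<in> set (vars_list s)" for x
    using depth_le_if_pleasant_path[OF assms that] .
  have "depth s' x \<le> height s" if "x \<in> set (vars_list s)" for x
    using le[OF that] depth_le_height[OF that] by linarith
  then have "height s' \<le> height s"
    unfolding height_def[of s'] vars by (auto simp: vars_list_ne intro!: Max.boundedI)
  with long have long': "height s' < length p" by simp
  have sat': "satisfies V E s' s" using sat by (simp add: satisfies_commute)
  have dist': "distinct (vars_list s')" using dist vars by simp
  have "depth s x \<le> depth s' x" if "x \<in> set (vars_list s)" for x
    using depth_le_if_pleasant_path[OF sat' dist' vars[symmetric] pp long'] that vars by simp
  with le show ?thesis
    using tm_eq_if_depth_eq[OF dist vars] by (simp add: order_antisym)
qed

lemma pleasant_path_length_le_H_tt: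
  assumes sat: "satisfies V E t t'" and "t \<in> B n" and "t' \<in> B n" and "t \<noteq> t'"
    and pp: "pleasant_path V E p"
  shows "length p \<le> H_tt t t'"
proof (rule ccontr)
  assume "\<not> length p \<le> H_tt t t'"
  then have "height t < length p \<or> height t' < length p" by (auto simp: H_tt_def)
  moreover have "distinct (vars_list t)" "distinct (vars_list t')"
    and "vars_list t' = vars_list t"
    using assms(2,3) by (auto simp: B_def)
  moreover have "satisfies V E t' t" using sat by (simp add: satisfies_commute)
  ultimately show False
    using eq_if_pleasant_path_longer_than_height[OF _ _ _ pp] sat \<open>t \<noteq> t'\<close> by metis
qed

lemma P_G_less:
  assumes "\<forall>p. pleasant_path V E p \<longrightarrow> length p \<le> h"
  shows "P_G V E < ereal (real h)"
proof -
  have "P_G V E \<le> ereal (real h - 1)"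
    unfolding P_G_def
  proof (rule Sup_least, clarify)
    fix p assume "pleasant_path V E p"
    with assms have "p \<noteq> []" "length p \<le> h" by (auto simp: pleasant_path_def)
    then show "ereal (real (length p - 1)) \<le> ereal (real h - 1)" by (cases p) auto
  qed
  also have "\<dots> < ereal (real h)" by simp
  finally show ?thesis .
qed

theorem lemma6p6:
  fixes V :: "'v set" and E :: "('v \<times> 'v) set" and n :: nat and t t' :: tm
  assumes "digraph V E"
    and "t \<in> B n" and "t' \<in> B n" and "t \<noteq> t'"
    and "satisfies V E t t'"
  shows "enat_dvd (M_G V E) (M_tt n t t') \<and> P_G V E < ereal (real (H_tt t t'))"
proof
  show "enat_dvd (M_G V E) (M_tt n t t')"
    using whirl_order_dvd_M_tt[OF assms(5,2,3)] by (intro enat_dvd_M_G) blast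
  show "P_G V E < ereal (real (H_tt t t'))"
    using pleasant_path_length_le_H_tt[OF assms(5,2,3,4)] by (intro P_G_less) blast
qed

end
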